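(* Let $n\geq 1$ and $0\leq p\leq 1$. Let $\Pr_p(C)$ denote the probability, under the bias-$p$ measure, that a Boolean function on $n$ variables is canalizing. Then $$\Pr_p(C) = (-1)^n\bigl(p^{2^n}+(1-p)^{2^n}\bigr) - 2n\,p^{2^{n-1}}(1-p)^{2^{n-1}} + \sum_{k=1}^n (-1)^{k+1}\binom{n}{k}2^k\bigl(p^{2^n-2^{n-k}}+(1-p)^{2^n-2^{n-k}}\bigr).$$
   Context: A Boolean function on $n$ variables is a function $f:\{0,1\}^n\to\{0,1\}$; write $[n]=\{0,1,\dots,n-1\}$ for the index set of the variables. For $0\leq p\leq 1$, the bias-$p$ probability measure on the (finite) set of all Boolean functions on $n$ variables is $\Pr_p(f)=p^{|f^{-1}\{1\}|}(1-p)^{|f^{-1}\{0\}|}$ (with $0^0=1$). A Boolean function $f$ is canalizing if there exist $i\in[n]$ and $s,v\in\{0,1\}$ such that for all $x\in\{0,1\}^n$, $x_i=s$ implies $f(x)=v$. $C$ denotes the set of canalizing Boolean functions on $n$ variables. *)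

theory Defs
  imports Complex_Main
begin

(* Inputs x in {0,1}^n are represented as bool lists of length n (True = 1, False = 0).
   A Boolean function on n variables is represented as a function bool list => bool
   that is False outside {0,1}^n (so that the set of Boolean functions is finite and
   in bijection with the maps {0,1}^n -> {0,1}). *)

definition cube :: "nat \<Rightarrow> bool list set" where
  "cube n = {x. length x = n}"

definition boolfuns :: "nat \<Rightarrow> (bool list \<Rightarrow> bool) set" where
  "boolfuns n = {f. \<forall>x. x \<notin> cube n \<longrightarrow> f x = False}"

definition canalizing :: "nat \<Rightarrow> (bool list \<Rightarrow> bool) \<Rightarrow> bool" where
  "canalizing n f \<longleftrightarrow>
     (\<exists>i<n. \<exists>s v. \<forall>x\<in>cube n. x ! i = s \<longrightarrow> f x = v)"

definition canal_set :: "nat \<Rightarrow> (bool list \<Rightarrow> bool) set" where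
  "canal_set n = {f \<in> boolfuns n. canalizing n f}"

(* bias-p weight: p^|f^{-1}{1}| (1-p)^|f^{-1}{0}|, with 0^0 = 1 (as for Isabelle's ^) *)
definition prob_p :: "nat \<Rightarrow> real \<Rightarrow> (bool list \<Rightarrow> bool) \<Rightarrow> real" where
  "prob_p n p f = p ^ card {x\<in>cube n. f x} * (1 - p) ^ card {x\<in>cube n. \<not> f x}"

definition Pr_p :: "nat \<Rightarrow> real \<Rightarrow> (bool list \<Rightarrow> bool) set \<Rightarrow> real" where
  "Pr_p n p A = (\<Sum>f\<in>A. prob_p n p f)"

end

theory Submission
  imports Defs "HOL-Library.FuncSet"
begin

(* Identify a Boolean function with its support S, a subset of the cube {0,1}^n; under the
   bias-p measure S is a random subset containing each point independently with probability p.
   The function is canalizing iff S or its complement contains a facet {x. x_i = s}.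
   The probability that S contains a facet is computed by inclusion-exclusion over the 2n
   facets: a family containing two opposite facets covers the cube, and any other family of
   k facets fixes k coordinates, so its union misses exactly 2^(n-k) points; there are
   (n choose k) 2^k such families. The complement is handled by exchanging p and 1 - p, and
   S and its complement both contain a facet exactly when S is itself a facet.
   The identity is polynomial in p. *)

definition graph_on :: "'a set \<Rightarrow> ('a \<Rightarrow> 'b) \<Rightarrow> ('a \<times> 'b) set" where
  "graph_on I g = (\<lambda>i. (i, g i)) ` I"

lemma the_snd_single_valued:
  assumes "inj_on fst B" "(i, v) \<in> B"
  shows "(THE w. (i, w) \<in> B) = v"
  using assms by (intro the_equality) (force simp: inj_on_def)+

lemma bij_betw_graph_on:
  "bij_betw (case_prod graph_on) (SIGMA I:Pow X. I \<rightarrow>\<^sub>E V) {B. B \<subseteq> X \<times> V \<and> inj_on fst B}"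
proof (rule bij_betw_byWitness[where f' = "\<lambda>B. (fst ` B, restrict (\<lambda>i. THE v. (i, v) \<in> B) (fst ` B))"])
  have "inj_on fst (graph_on I g)" for I and g :: "'a \<Rightarrow> 'b"
    by (auto simp: graph_on_def inj_on_def)
  then show "\<forall>Ig\<in>SIGMA I:Pow X. I \<rightarrow>\<^sub>E V. (fst ` case_prod graph_on Ig,
     restrict (\<lambda>i. THE v. (i, v) \<in> case_prod graph_on Ig) (fst ` case_prod graph_on Ig)) = Ig"
    and "case_prod graph_on ` (SIGMA I:Pow X. I \<rightarrow>\<^sub>E V) \<subseteq> {B. B \<subseteq> X \<times> V \<and> inj_on fst B}"
    by (force simp: graph_on_def image_image PiE_iff extensional_def the_snd_single_valued)+
  show "\<forall>B\<in>{B. B \<subseteq> X \<times> V \<and> inj_on fst B}.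
      case_prod graph_on (fst ` B, restrict (\<lambda>i. THE v. (i, v) \<in> B) (fst ` B)) = B"
    and "(\<lambda>B. (fst ` B, restrict (\<lambda>i. THE v. (i, v) \<in> B) (fst ` B))) ` {B. B \<subseteq> X \<times> V \<and> inj_on fst B}
      \<subseteq> (SIGMA I:Pow X. I \<rightarrow>\<^sub>E V)"
    by (force simp: graph_on_def the_snd_single_valued)+
qed

lemma sum_Pow_by_card:
  fixes \<phi> :: "nat \<Rightarrow> 'b::comm_semiring_1"
  assumes "finite X"
  shows "(\<Sum>I\<in>Pow X. \<phi> (card I)) = (\<Sum>k\<le>card X. of_nat (card X choose k) * \<phi> k)"
proof -
  have "(\<Sum>I\<in>Pow X. \<phi> (card I)) = (\<Sum>k\<le>card X. \<Sum>I | I \<in> Pow X \<and> card I = k. \<phi> (card I))"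
    using assms by (intro sum.group[symmetric]) (auto simp: card_mono)
  also have "\<dots> = (\<Sum>k\<le>card X. of_nat (card X choose k) * \<phi> k)"
    using n_subsets[OF assms] by (intro sum.cong) auto
  finally show ?thesis .
qed

lemma sum_single_valued_subsets:
  fixes \<phi> :: "nat \<Rightarrow> 'c::comm_semiring_1"
  assumes "finite X" "finite V"
  shows "(\<Sum>B | B \<subseteq> X \<times> V \<and> inj_on fst B. \<phi> (card B))
       = (\<Sum>k\<le>card X. of_nat (card X choose k) * of_nat (card V) ^ k * \<phi> k)"
proof -
  have card_graph: "card (graph_on I g) = card I" for I and g :: "'a \<Rightarrow> 'b"
    unfolding graph_on_def by (rule card_image) (auto simp: inj_on_def)
  have "(\<Sum>B | B \<subseteq> X \<times> V \<and> inj_on fst B. \<phi> (card B)) = (\<Sum>(I, g)\<in>(SIGMA I:Pow X. I \<rightarrow>\<^sub>E V). \<phi> (card I))"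
    by (rule sum.reindex_bij_betw[OF bij_betw_graph_on, symmetric, THEN trans])
       (simp add: split_def card_graph)
  also have "\<dots> = (\<Sum>I\<in>Pow X. of_nat (card V) ^ card I * \<phi> (card I))"
  proof -
    have "finite I" if "I \<in> Pow X" for I
      using that assms(1) finite_subset by blast
    then show ?thesis
      using assms(2) by (subst sum.Sigma[symmetric]) (auto intro!: sum.cong simp: card_PiE finite_PiE)
  qed
  also have "\<dots> = (\<Sum>k\<le>card X. of_nat (card X choose k) * of_nat (card V) ^ k * \<phi> k)"
    using sum_Pow_by_card[OF assms(1), of "\<lambda>k. of_nat (card V) ^ k * \<phi> k"] by (simp add: mult.assoc)
  finally show ?thesis .
qed

lemma sum_Pow_minus_one_power_card:
  assumes "finite A" "A \<noteq> {}"
  shows "(\<Sum>B\<in>Pow A. (-1) ^ card B :: 'a::comm_ring_1) = 0"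
proof -
  have "card A > 0" using assms by (simp add: card_gt_0_iff)
  then show ?thesis
    using prod_diff_conv_sum[OF assms(1), of "\<lambda>_. 1" "\<lambda>_. 1 :: 'a"] by (simp add: zero_power)
qed

lemma card_cube_coordinatewise:
  "card {x \<in> cube n. \<forall>i<n. x ! i \<in> D i} = (\<Prod>i<n. card (D i))"
proof -
  have "bij_betw (\<lambda>x. restrict ((!) x) {..<n}) {x \<in> cube n. \<forall>i<n. x ! i \<in> D i} (\<Pi>\<^sub>E i\<in>{..<n}. D i)"
  proof (rule bij_betw_byWitness[where f' = "\<lambda>f. map f [0..<n]"])
    show "\<forall>x\<in>{x \<in> cube n. \<forall>i<n. x ! i \<in> D i}. map (restrict ((!) x) {..<n}) [0..<n] = x"
      by (auto simp: cube_def intro: nth_equalityI)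
    show "\<forall>f\<in>\<Pi>\<^sub>E i\<in>{..<n}. D i. restrict ((!) (map f [0..<n])) {..<n} = f"
      by (auto simp: PiE_iff extensional_def fun_eq_iff)
    show "(\<lambda>x. restrict ((!) x) {..<n}) ` {x \<in> cube n. \<forall>i<n. x ! i \<in> D i} \<subseteq> (\<Pi>\<^sub>E i\<in>{..<n}. D i)"
      by (auto simp: PiE_iff)
    show "(\<lambda>f. map f [0..<n]) ` (\<Pi>\<^sub>E i\<in>{..<n}. D i) \<subseteq> {x \<in> cube n. \<forall>i<n. x ! i \<in> D i}"
      by (simp add: image_subset_iff cube_def PiE_iff)
  qed
  then show ?thesis by (simp add: bij_betw_same_card card_PiE)
qed

lemma card_cube: "card (cube n) = 2 ^ n"
  using card_cube_coordinatewise[of n "\<lambda>_. UNIV"] by simp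

lemma finite_cube: "finite (cube n)"
  using card_cube by (intro card_ge_0_finite) simp

definition facet :: "nat \<Rightarrow> nat \<times> bool \<Rightarrow> bool list set" where
  "facet n a = {x \<in> cube n. x ! fst a = snd a}"

lemma facet_subset_cube: "facet n a \<subseteq> cube n"
  by (auto simp: facet_def)

lemma cube_diff_facet: "cube n - facet n (i, s) = facet n (i, \<not> s)"
  by (auto simp: facet_def)

definition contains_facet :: "nat \<Rightarrow> bool list set \<Rightarrow> bool" where
  "contains_facet n S \<longleftrightarrow> (\<exists>a\<in>{..<n} \<times> UNIV. facet n a \<subseteq> S)"

lemma facets_intersect:
  assumes "i < n" "j < n" "i = j \<Longrightarrow> s = t"
  shows "facet n (i, s) \<inter> facet n (j, t) \<noteq> {}"
proof -
  have "(replicate n s)[j := t] \<in> facet n (i, s) \<inter> facet n (j, t)"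
    using assms by (auto simp: facet_def cube_def nth_list_update)
  then show ?thesis by blast
qed

lemma inj_on_facet: "inj_on (facet n) ({..<n} \<times> UNIV)"
proof (rule inj_onI, clarsimp)
  fix i j s t
  assume ij: "i < n" "j < n" and eq: "facet n (i, s) = facet n (j, t)"
  have "facet n (j, t) \<inter> facet n (j, \<not> t) = {}"
    by (auto simp: facet_def)
  then have "i = j"
    using facets_intersect[OF ij, of s "\<not> t"] eq by blast
  moreover have "facet n (i, s) \<noteq> {}"
    using facets_intersect[OF ij(1) ij(1)] by blast
  ultimately show "i = j \<and> s = t"
    using eq \<open>facet n (j, t) \<inter> facet n (j, \<not> t) = {}\<close> by (cases "s = t") auto
qed

lemma Union_facets_not_single_valued:
  assumes "\<not> inj_on fst B"
  shows "\<Union>(facet n ` B) = cube n"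
proof -
  obtain a b where "a \<in> B" "b \<in> B" "fst a = fst b" "a \<noteq> b"
    using assms unfolding inj_on_def by blast
  moreover from this have "b = (fst a, \<not> snd a)"
    by (cases a; cases b) auto
  moreover have "facet n a \<union> facet n (fst a, \<not> snd a) = cube n"
    by (auto simp: facet_def)
  ultimately show ?thesis
    using facet_subset_cube by blast
qed

lemma card_cube_diff_Union_facets:
  assumes "B \<subseteq> {..<n} \<times> UNIV" "inj_on fst B"
  shows "card (cube n - \<Union>(facet n ` B)) = 2 ^ (n - card B)"
proof -
  have card_free: "card (- {s. (i, s) \<in> B}) = (if i \<in> fst ` B then 1 else 2)" for i
  proof (cases "i \<in> fst ` B")
    case True
    then obtain s where "(i, s) \<in> B" by auto
    moreover have "(i, \<not> s) \<notin> B"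
      using inj_onD[OF assms(2) _ calculation, of "(i, \<not> s)"] by auto
    ultimately have "- {s. (i, s) \<in> B} = {\<not> s}"
      by (auto, metis (full_types))
    then show ?thesis using True by simp
  next
    case False
    then have "- {s. (i, s) \<in> B} = UNIV" by force
    then show ?thesis using False by (simp add: UNIV_bool)
  qed
  have "cube n - \<Union>(facet n ` B) = {x \<in> cube n. \<forall>i<n. x ! i \<in> - {s. (i, s) \<in> B}}"
    using assms(1) by (auto simp: facet_def)
  then have "card (cube n - \<Union>(facet n ` B)) = (\<Prod>i<n. if i \<in> fst ` B then 1 else 2)"
    by (simp only: card_cube_coordinatewise card_free)
  also have "\<dots> = 2 ^ card ({..<n} - fst ` B)"
    by (simp add: prod.If_cases Diff_eq)
  also have "card ({..<n} - fst ` B) = n - card B"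
    using assms by (subst card_Diff_subset) (auto simp: card_image finite_subset)
  finally show ?thesis .
qed

lemma card_Union_facets:
  assumes "B \<subseteq> {..<n} \<times> UNIV"
  shows "card (\<Union>(facet n ` B)) = (if inj_on fst B then 2 ^ n - 2 ^ (n - card B) else 2 ^ n)"
proof -
  have "\<Union>(facet n ` B) \<subseteq> cube n" using facet_subset_cube by blast
  moreover from this have "card (\<Union>(facet n ` B)) \<le> 2 ^ n"
    using card_mono[OF finite_cube] card_cube by metis
  ultimately show ?thesis
    using assms card_cube_diff_Union_facets[OF assms] Union_facets_not_single_valued
    by (auto simp: card_Diff_subset finite_subset[OF _ finite_cube] card_cube)
qed

lemma card_facet:
  assumes "i < n"
  shows "card (facet n (i, s)) = 2 ^ (n - 1)"
  using card_cube_diff_Union_facets[of "{(i, \<not> s)}" n] assms by (simp add: cube_diff_facet)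

lemma contains_facet_and_complement_iff:
  assumes "S \<subseteq> cube n"
  shows "contains_facet n S \<and> contains_facet n (cube n - S)
     \<longleftrightarrow> S \<in> facet n ` ({..<n} \<times> UNIV)"
proof
  assume "contains_facet n S \<and> contains_facet n (cube n - S)"
  then obtain i s j t where ij: "i < n" "j < n" and "facet n (i, s) \<subseteq> S" "facet n (j, t) \<subseteq> cube n - S"
    by (auto simp: contains_facet_def)
  then have "facet n (i, s) \<inter> facet n (j, t) = {}"
    by blast
  then have "j = i" "t = (\<not> s)"
    using facets_intersect[OF ij] by (metis (full_types))+
  then have "S = facet n (i, s)"
    using assms \<open>facet n (i, s) \<subseteq> S\<close> \<open>facet n (j, t) \<subseteq> cube n - S\<close> cube_diff_facet[of n i "\<not> s"] by auto
  then show "S \<in> facet n ` ({..<n} \<times> UNIV)"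
    using ij by auto
next
  assume "S \<in> facet n ` ({..<n} \<times> UNIV)"
  then obtain i s where "i < n" "S = facet n (i, s)"
    by auto
  then show "contains_facet n S \<and> contains_facet n (cube n - S)"
    using cube_diff_facet[of n i s] unfolding contains_facet_def by blast
qed

definition random_subset_prob :: "real \<Rightarrow> 'a set \<Rightarrow> 'a set set \<Rightarrow> real" where
  "random_subset_prob p U E = (\<Sum>S\<in>Pow U \<inter> E. p ^ card S * (1 - p) ^ card (U - S))"

lemma random_subset_prob_cong:
  assumes "\<And>S. S \<subseteq> U \<Longrightarrow> S \<in> E \<longleftrightarrow> S \<in> F"
  shows "random_subset_prob p U E = random_subset_prob p U F"
proof -
  have "Pow U \<inter> E = Pow U \<inter> F" using assms by blast
  then show ?thesis by (simp add: random_subset_prob_def)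
qed

lemma random_subset_prob_UNIV:
  assumes "finite U"
  shows "random_subset_prob p U UNIV = 1"
proof -
  have "(\<Prod>x\<in>U. p + (1 - p)) = (\<Sum>S\<in>Pow U. (\<Prod>x\<in>S. p) * (\<Prod>x\<in>U - S. 1 - p))"
    by (rule prod_add[OF assms])
  then show ?thesis by (simp add: random_subset_prob_def)
qed

lemma random_subset_prob_supersets:
  assumes "finite U" "V \<subseteq> U"
  shows "random_subset_prob p U {S. V \<subseteq> S} = p ^ card V"
proof -
  have fin: "finite V" "finite (U - V)"
    using assms finite_subset by auto
  have "Pow U \<inter> {S. V \<subseteq> S} = (\<union>) V ` Pow (U - V)"
  proof (intro equalityI subsetI)
    fix S assume "S \<in> Pow U \<inter> {S. V \<subseteq> S}"
    then have "S = V \<union> (S - V)" "S - V \<in> Pow (U - V)" by auto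
    then show "S \<in> (\<union>) V ` Pow (U - V)" by blast
  qed (use assms(2) in auto)
  moreover have "inj_on ((\<union>) V) (Pow (U - V))"
    by (rule inj_onI) blast
  moreover have "p ^ card (V \<union> T) * (1 - p) ^ card (U - (V \<union> T))
      = p ^ card V * (p ^ card T * (1 - p) ^ card (U - V - T))" if "T \<in> Pow (U - V)" for T
  proof -
    have "card (V \<union> T) = card V + card T"
      using that fin by (intro card_Un_disjoint) (auto intro: finite_subset)
    moreover have "U - (V \<union> T) = U - V - T" by blast
    ultimately show ?thesis by (simp add: power_add)
  qed
  ultimately have "random_subset_prob p U {S. V \<subseteq> S} = p ^ card V * random_subset_prob p (U - V) UNIV"
    by (simp add: random_subset_prob_def sum.reindex sum_distrib_left)
  then show ?thesis
    using random_subset_prob_UNIV[OF fin(2)] by simp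
qed

lemma random_subset_prob_Un:
  assumes "finite U"
  shows "random_subset_prob p U (E \<union> F)
       = random_subset_prob p U E + random_subset_prob p U F - random_subset_prob p U (E \<inter> F)"
proof -
  have "Pow U \<inter> (E \<union> F) = (Pow U \<inter> E) \<union> (Pow U \<inter> F)" "Pow U \<inter> (E \<inter> F) = (Pow U \<inter> E) \<inter> (Pow U \<inter> F)"
    by blast+
  then show ?thesis
    using assms by (simp add: random_subset_prob_def sum_Un)
qed

lemma random_subset_prob_complements:
  "random_subset_prob p U {S. U - S \<in> E} = random_subset_prob (1 - p) U E"
  unfolding random_subset_prob_def
  by (rule sum.reindex_bij_witness[where i = "\<lambda>S. U - S" and j = "\<lambda>S. U - S"])
     (auto simp: double_diff mult.commute)

lemma random_subset_prob_covers_some: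
  fixes H :: "'b \<Rightarrow> 'a set"
  assumes "finite U" "finite A" "\<And>a. a \<in> A \<Longrightarrow> H a \<subseteq> U"
  shows "random_subset_prob p U {S. \<exists>a\<in>A. H a \<subseteq> S}
       = 1 - (\<Sum>B\<in>Pow A. (-1) ^ card B * p ^ card (\<Union>(H ` B)))"
proof -
  let ?G = "\<lambda>a. {S. H a \<subseteq> S}"
  have additive: "random_subset_prob p U (E \<union> F) = random_subset_prob p U E + random_subset_prob p U F"
    if "disjnt E F" for E F
    using that random_subset_prob_Un[OF assms(1), of p E F]
    by (simp add: disjnt_def random_subset_prob_def)
  have "random_subset_prob p U (\<Inter>(?G ` B)) = p ^ card (\<Union>(H ` B))" if "B \<subseteq> A" "B \<noteq> {}" for B
  proof -
    have "\<Inter>(?G ` B) = {S. \<Union>(H ` B) \<subseteq> S}" using that(2) by auto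
    moreover have "\<Union>(H ` B) \<subseteq> U" using that(1) assms(3) by blast
    ultimately show ?thesis using random_subset_prob_supersets[OF assms(1)] by simp
  qed
  then have "random_subset_prob p U (\<Union>(?G ` A))
      = (\<Sum>B | B \<subseteq> A \<and> B \<noteq> {}. (-1) ^ (card B + 1) * p ^ card (\<Union>(H ` B)))"
    using Incl_Excl_UN[of "random_subset_prob p U", OF additive assms(2)] by simp
  also have "\<dots> = - (\<Sum>B\<in>Pow A - {{}}. (-1) ^ card B * p ^ card (\<Union>(H ` B)))"
    by (simp add: sum_negf[symmetric] Pow_def set_diff_eq conj_commute)
  also have "\<dots> = 1 - (\<Sum>B\<in>Pow A. (-1) ^ card B * p ^ card (\<Union>(H ` B)))"
    using assms(2) by (simp add: sum.remove[of "Pow A" "{}"])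
  finally show ?thesis
    by (simp add: Union_eq Bex_def)
qed

lemma random_subset_prob_facets:
  "random_subset_prob p (cube n) (facet n ` ({..<n} \<times> UNIV))
     = 2 * real n * p ^ 2 ^ (n - 1) * (1 - p) ^ 2 ^ (n - 1)"
proof -
  have "random_subset_prob p (cube n) (facet n ` ({..<n} \<times> UNIV))
      = (\<Sum>a\<in>{..<n} \<times> UNIV. p ^ card (facet n a) * (1 - p) ^ card (cube n - facet n a))"
    using facet_subset_cube
    by (simp add: random_subset_prob_def Int_absorb1 image_subset_iff sum.reindex[OF inj_on_facet])
  also have "\<dots> = (\<Sum>a\<in>{..<n} \<times> (UNIV :: bool set). p ^ 2 ^ (n - 1) * (1 - p) ^ 2 ^ (n - 1))"
    by (intro sum.cong) (auto simp: cube_diff_facet card_facet)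
  finally show ?thesis
    by (simp add: card_cartesian_product)
qed

lemma sum_Pow_facets:
  fixes r :: real
  assumes "n \<ge> 1"
  shows "(\<Sum>B\<in>Pow ({..<n} \<times> UNIV). (-1) ^ card B * r ^ card (\<Union>(facet n ` B)))
       = (\<Sum>k\<le>n. real (n choose k) * (-2) ^ k * (r ^ (2 ^ n - 2 ^ (n - k)) - r ^ 2 ^ n))"
proof -
  let ?A = "{..<n} \<times> (UNIV :: bool set)"
  let ?F = "\<lambda>B. (-1) ^ card B * (r ^ card (\<Union>(facet n ` B)) - r ^ 2 ^ n)"
  have "(0, True) \<in> ?A" using assms by simp
  then have "?A \<noteq> {}" by blast
  then have "(\<Sum>B\<in>Pow ?A. (-1) ^ card B * r ^ card (\<Union>(facet n ` B))) = (\<Sum>B\<in>Pow ?A. ?F B)"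
    using sum_Pow_minus_one_power_card[of ?A, where 'a=real]
    by (simp add: right_diff_distrib sum_subtractf flip: sum_distrib_right)
  also have "\<dots> = (\<Sum>B | B \<subseteq> ?A \<and> inj_on fst B. ?F B)"
    by (intro sum.mono_neutral_right) (auto simp: card_Union_facets card_cube)
  also have "\<dots> = (\<Sum>B | B \<subseteq> ?A \<and> inj_on fst B. (-1) ^ card B * (r ^ (2 ^ n - 2 ^ (n - card B)) - r ^ 2 ^ n))"
    by (intro sum.cong) (auto simp: card_Union_facets)
  also have "\<dots> = (\<Sum>k\<le>n. real (n choose k) * 2 ^ k * ((-1) ^ k * (r ^ (2 ^ n - 2 ^ (n - k)) - r ^ 2 ^ n)))"
    using sum_single_valued_subsets[of "{..<n}" "UNIV :: bool set"
        "\<lambda>k. (-1) ^ k * (r ^ (2 ^ n - 2 ^ (n - k)) - r ^ 2 ^ n)"]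
    by (simp add: UNIV_bool)
  finally show ?thesis
    by (simp add: power_minus' mult_ac)
qed

lemma one_minus_binomial_sum:
  fixes x :: real and g :: "nat \<Rightarrow> real"
  assumes "g 0 = 1"
  shows "1 - (\<Sum>k\<le>n. real (n choose k) * (-2) ^ k * (g k - x))
       = (-1) ^ n * x + (\<Sum>k=1..n. (-1) ^ (k + 1) * real (n choose k) * 2 ^ k * g k)"
proof -
  have binomial: "(\<Sum>k\<le>n. real (n choose k) * (-2) ^ k) = (-1) ^ n"
    using binomial_ring[of "-2 :: real" 1 n] by (simp add: mult_ac)
  have "(\<Sum>k\<le>n. real (n choose k) * (-2) ^ k * g k) = 1 + (\<Sum>k=1..n. real (n choose k) * (-2) ^ k * g k)"
    using assms by (simp add: atMost_atLeast0 sum.atLeast_Suc_atMost)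
  moreover have "(-2 :: real) ^ k = - ((-1) ^ (k + 1) * 2 ^ k)" for k
    by (simp add: power_minus')
  ultimately have "(\<Sum>k\<le>n. real (n choose k) * (-2) ^ k * g k)
      = 1 - (\<Sum>k=1..n. (-1) ^ (k + 1) * real (n choose k) * 2 ^ k * g k)"
    by (simp add: sum_negf mult_ac)
  then show ?thesis
    by (simp add: right_diff_distrib sum_subtractf binomial flip: sum_distrib_right)
qed

lemma random_subset_prob_contains_facet:
  fixes r :: real
  assumes "n \<ge> 1"
  shows "random_subset_prob r (cube n) (Collect (contains_facet n))
       = (-1) ^ n * r ^ 2 ^ n + (\<Sum>k=1..n. (-1) ^ (k + 1) * real (n choose k) * 2 ^ k * r ^ (2 ^ n - 2 ^ (n - k)))"
  unfolding contains_facet_def[abs_def]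
  using random_subset_prob_covers_some[OF finite_cube[of n], where A = "{..<n} \<times> UNIV" and H = "facet n"]
  by (simp add: facet_subset_cube sum_Pow_facets[OF assms] one_minus_binomial_sum)

lemma canalizing_indicator_iff:
  "canalizing n (\<lambda>x. x \<in> S)
     \<longleftrightarrow> contains_facet n S \<or> contains_facet n (cube n - S)"
  by (auto simp: canalizing_def contains_facet_def facet_def ex_bool_eq)

lemma Pr_p_eq_random_subset_prob:
  assumes "F \<subseteq> boolfuns n"
  shows "Pr_p n p F = random_subset_prob p (cube n) {S. (\<lambda>x. x \<in> S) \<in> F}"
  unfolding Pr_p_def random_subset_prob_def
proof (rule sum.reindex_bij_witness[where i = "\<lambda>S x. x \<in> S" and j = "\<lambda>f. {x \<in> cube n. f x}"])
  fix f assume "f \<in> F"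
  then have "f \<in> boolfuns n" using assms by blast
  then show indicator: "(\<lambda>x. x \<in> {x \<in> cube n. f x}) = f"
    by (auto simp: boolfuns_def)
  have "(\<lambda>x. x \<in> {x \<in> cube n. f x}) \<in> F"
    using \<open>f \<in> F\<close> by (subst indicator)
  then show "{x \<in> cube n. f x} \<in> Pow (cube n) \<inter> {S. (\<lambda>x. x \<in> S) \<in> F}"
    by blast
  have "cube n - {x \<in> cube n. f x} = {x \<in> cube n. \<not> f x}"
    by blast
  then show "p ^ card {x \<in> cube n. f x} * (1 - p) ^ card (cube n - {x \<in> cube n. f x}) = prob_p n p f"
    by (simp add: prob_p_def)
next
  fix S assume "S \<in> Pow (cube n) \<inter> {S. (\<lambda>x. x \<in> S) \<in> F}"
  then show "{x \<in> cube n. x \<in> S} = S" "(\<lambda>x. x \<in> S) \<in> F"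
    by auto
qed

theorem mainTheorem1:
  fixes n :: nat and p :: real
  assumes "n \<ge> 1" and "0 \<le> p" and "p \<le> 1"
  shows "Pr_p n p (canal_set n) =
    (-1) ^ n * (p ^ (2 ^ n) + (1 - p) ^ (2 ^ n))
    - 2 * real n * p ^ (2 ^ (n - 1)) * (1 - p) ^ (2 ^ (n - 1))
    + (\<Sum>k=1..n. (-1) ^ (k + 1) * real (n choose k) * 2 ^ k *
         (p ^ (2 ^ n - 2 ^ (n - k)) + (1 - p) ^ (2 ^ n - 2 ^ (n - k))))"
proof -
  let ?U = "cube n"
  let ?E = "Collect (contains_facet n)"
  have "Pr_p n p (canal_set n) = random_subset_prob p ?U {S. (\<lambda>x. x \<in> S) \<in> canal_set n}"
    by (rule Pr_p_eq_random_subset_prob) (simp add: canal_set_def)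
  also have "\<dots> = random_subset_prob p ?U (?E \<union> {S. ?U - S \<in> ?E})"
    by (rule random_subset_prob_cong) (auto simp: canal_set_def boolfuns_def canalizing_indicator_iff)
  also have "\<dots> = random_subset_prob p ?U ?E + random_subset_prob p ?U {S. ?U - S \<in> ?E}
      - random_subset_prob p ?U (?E \<inter> {S. ?U - S \<in> ?E})"
    by (rule random_subset_prob_Un[OF finite_cube])
  also have "random_subset_prob p ?U {S. ?U - S \<in> ?E} = random_subset_prob (1 - p) ?U ?E"
    by (rule random_subset_prob_complements)
  also have "random_subset_prob p ?U (?E \<inter> {S. ?U - S \<in> ?E})
      = random_subset_prob p ?U (facet n ` ({..<n} \<times> UNIV))"
    by (rule random_subset_prob_cong) (simp add: contains_facet_and_complement_iff)
  finally show ?thesis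
    by (simp only: random_subset_prob_contains_facet[OF assms(1)] random_subset_prob_facets)
       (simp add: distrib_left sum.distrib sum_subtractf sum_negf)
qed

end
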